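(* Assume the Setting (S). For every $n\ge0$, pointwise in $z$, $$\Omega_n=2\,(h_{n+1}-h_n),\qquad \operatorname{Tr} g_n=2\,(h_{n+1}+h_n).$$ In particular $\Omega_0=\operatorname{Tr}g_0=2h_1>0$.
   Context: Setting (S). Let $\mathcal H$ be a separable complex Hilbert space with inner product $\langle\cdot|\cdot\rangle$, antilinear in the first slot. Let $\Lambda\subset\mathbb C$ be a lattice with fundamental domain $D$. Write $z=x+iy$, $\partial=\tfrac12(\partial_x-i\partial_y)$, $\bar\partial=\tfrac12(\partial_x+i\partial_y)$. Let $f:\mathbb C\to\mathcal H$ be holomorphic and satisfy: (i) for every $z\in\mathbb C$ and every $n\ge0$ the vectors $f(z),\partial f(z),\dots,\partial^n f(z)$ are linearly independent; (ii) for every $\lambda\in\Lambda$ there are a nowhere-vanishing holomorphic function $c_\lambda:\mathbb C\to\mathbb C$ and a unitary operator $V_\lambda$ on $\mathcal H$ independent of $z$ such that $f(z+\lambda)=c_\lambda(z)V_\lambda f(z)$ for all $z$. For $n\ge0$ let $P_n(z)$ be the orthogonal projector onto $\mathrm{span}\{f(z),\partial f(z),\dots,\partial^{n-1}f(z)\}$ (with $P_0=0$), let $r_n=\|(1-P_n)\partial^n f\|>0$ and define the "generalized Landau levels" $u_n=(1-P_n)\partial^n f/r_n$. For a smooth unit-vector-valued map $u$ of $(x,y)$ define $\chi_{ab}=\langle\partial_a u|(1-|u\rangle\langle u|)|\partial_b u\rangle$ for $a,b\in\{x,y\}$, $g_{ab}=\operatorname{Re}\chi_{ab}$, $\operatorname{Tr}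 g=g_{xx}+g_{yy}$, and $\Omega=2\operatorname{Im}\chi_{xy}$; write $g_n,\Omega_n$ for these computed from $u=u_n$. Define $h_N=|\langle u_N|\partial u_{N-1}\rangle|^2$ for $N\ge1$ and $h_0=0$. *)

theory Defs
  imports "HOL-Analysis.Analysis"
begin

class complex_vector = real_vector +
  fixes scaleC :: "complex \<Rightarrow> 'a \<Rightarrow> 'a" (infixr \<open>*\<^sub>C\<close> 75)
  assumes scaleC_add_right: "a *\<^sub>C (x + y) = a *\<^sub>C x + a *\<^sub>C y"
    and scaleC_add_left: "(a + b) *\<^sub>C x = a *\<^sub>C x + b *\<^sub>C x"
    and scaleC_scaleC: "a *\<^sub>C (b *\<^sub>C x) = (a * b) *\<^sub>C x"
    and scaleC_one: "1 *\<^sub>C x = x"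
    and scaleR_scaleC: "scaleR r x = complex_of_real r *\<^sub>C x"

text \<open>Inner product, antilinear in the first slot.\<close>
class complex_inner = complex_vector + real_normed_vector + dist_norm + sgn_div_norm
    + uniformity_dist + open_uniformity +
  fixes cinner :: "'a \<Rightarrow> 'a \<Rightarrow> complex"
  assumes cinner_conj_sym: "cinner x y = cnj (cinner y x)"
    and cinner_add_right: "cinner x (y + z) = cinner x y + cinner x z"
    and cinner_scaleC_right: "cinner x (c *\<^sub>C y) = c * cinner x y"
    and cinner_nonneg: "0 \<le> Re (cinner x x)"
    and cinner_eq_zero_iff: "cinner x x = 0 \<longleftrightarrow> x = 0"
    and norm_eq_sqrt_cinner: "norm x = sqrt (Re (cinner x x))"

instantiation complex :: complex_inner
begin
definition scaleC_complex :: "complex \<Rightarrow> complex \<Rightarrow> complex" where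
  "scaleC_complex a x = a * x"
definition cinner_complex :: "complex \<Rightarrow> complex \<Rightarrow> complex" where
  "cinner_complex x y = cnj x * y"
instance
proof
  fix x y z :: complex and a b :: complex and r :: real
  show "a *\<^sub>C (x + y) = a *\<^sub>C x + a *\<^sub>C y" by (simp add: scaleC_complex_def algebra_simps)
  show "(a + b) *\<^sub>C x = a *\<^sub>C x + b *\<^sub>C x" by (simp add: scaleC_complex_def algebra_simps)
  show "a *\<^sub>C (b *\<^sub>C x) = (a * b) *\<^sub>C x" by (simp add: scaleC_complex_def)
  show "1 *\<^sub>C x = x" by (simp add: scaleC_complex_def)
  show "scaleR r x = complex_of_real r *\<^sub>C x" by (simp add: scaleC_complex_def scaleR_conv_of_real)
  show "cinner x y = cnj (cinner y x)" by (simp add: cinner_complex_def)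
  show "cinner x (y + z) = cinner x y + cinner x z" by (simp add: cinner_complex_def algebra_simps)
  show "cinner x (a *\<^sub>C y) = a * cinner x y" by (simp add: cinner_complex_def scaleC_complex_def)
  show "0 \<le> Re (cinner x x)" by (simp add: cinner_complex_def)
  show "cinner x x = 0 \<longleftrightarrow> x = 0" by (simp add: cinner_complex_def)
  show "norm x = sqrt (Re (cinner x x))"
    by (simp add: cinner_complex_def complex_mult_cnj cmod_def power2_eq_square)
qed
end

definition is_lattice :: "complex set \<Rightarrow> bool" where
  "is_lattice L \<longleftrightarrow> (\<exists>w1 w2. Im (cnj w1 * w2) \<noteq> 0 \<and>
      L = {of_int m * w1 + of_int n * w2 | m n. True})"

definition hol :: "(complex \<Rightarrow> 'H::complex_inner) \<Rightarrow> bool" where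
  "hol f \<longleftrightarrow> (\<forall>z. \<exists>d. (f has_derivative (\<lambda>h. h *\<^sub>C d)) (at z))"

definition unitary_op :: "('H::complex_inner \<Rightarrow> 'H) \<Rightarrow> bool" where
  "unitary_op V \<longleftrightarrow> (\<forall>x y. V (x + y) = V x + V y) \<and> (\<forall>c x. V (c *\<^sub>C x) = c *\<^sub>C V x)
     \<and> (\<forall>x y. cinner (V x) (V y) = cinner x y) \<and> surj V"

definition dX :: "(complex \<Rightarrow> 'H::complex_inner) \<Rightarrow> complex \<Rightarrow> 'H" where
  "dX u z = vector_derivative (\<lambda>t::real. u (z + complex_of_real t)) (at 0)"
definition dY :: "(complex \<Rightarrow> 'H::complex_inner) \<Rightarrow> complex \<Rightarrow> 'H" where
  "dY u z = vector_derivative (\<lambda>t::real. u (z + \<i> * complex_of_real t)) (at 0)"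
definition Dz :: "(complex \<Rightarrow> 'H::complex_inner) \<Rightarrow> complex \<Rightarrow> 'H" where
  "Dz u z = (1/2) *\<^sub>C (dX u z - \<i> *\<^sub>C dY u z)"

primrec dpow :: "(complex \<Rightarrow> 'H::complex_inner) \<Rightarrow> nat \<Rightarrow> complex \<Rightarrow> 'H" where
  "dpow f 0 = f"
| "dpow f (Suc n) = Dz (dpow f n)"

definition lin_indep_upto :: "(nat \<Rightarrow> 'H::complex_inner) \<Rightarrow> nat \<Rightarrow> bool" where
  "lin_indep_upto v n \<longleftrightarrow>
     (\<forall>c. (\<Sum>k\<le>n. c k *\<^sub>C v k) = 0 \<longrightarrow> (\<forall>k\<le>n. c k = 0))"

definition Pn :: "(complex \<Rightarrow> 'H::complex_inner) \<Rightarrow> nat \<Rightarrow> complex \<Rightarrow> 'H \<Rightarrow> 'H" where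
  "Pn f n z v = (THE p. (\<exists>c. p = (\<Sum>k<n. c k *\<^sub>C dpow f k z)) \<and>
                        (\<forall>k<n. cinner (dpow f k z) (v - p) = 0))"

definition LL :: "(complex \<Rightarrow> 'H::complex_inner) \<Rightarrow> nat \<Rightarrow> complex \<Rightarrow> 'H" where
  "LL f n z = (let w = dpow f n z - Pn f n z (dpow f n z)
               in complex_of_real (1 / norm w) *\<^sub>C w)"

definition chi :: "((complex \<Rightarrow> 'H) \<Rightarrow> complex \<Rightarrow> 'H) \<Rightarrow> ((complex \<Rightarrow> 'H) \<Rightarrow> complex \<Rightarrow> 'H)
    \<Rightarrow> (complex \<Rightarrow> 'H::complex_inner) \<Rightarrow> complex \<Rightarrow> complex" where
  "chi da db u z = cinner (da u z) (db u z - cinner (u z) (db u z) *\<^sub>C u z)"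

definition trg :: "(complex \<Rightarrow> 'H::complex_inner) \<Rightarrow> complex \<Rightarrow> real" where
  "trg u z = Re (chi dX dX u z) + Re (chi dY dY u z)"

definition Omega :: "(complex \<Rightarrow> 'H::complex_inner) \<Rightarrow> complex \<Rightarrow> real" where
  "Omega u z = 2 * Im (chi dX dY u z)"

definition hN :: "(complex \<Rightarrow> 'H::complex_inner) \<Rightarrow> nat \<Rightarrow> complex \<Rightarrow> real" where
  "hN f N z = (if N = 0 then 0 else (cmod (cinner (LL f N z) (Dz (LL f (N - 1)) z)))\<^sup>2)"

end

theory Submission
  imports Defs "HOL-Complex_Analysis.Complex_Analysis"
begin

text \<open>Write d and dbar for the Wirtinger derivatives, so that d_x = d + dbar and d_y = i (d - dbar).
  By Gram--Schmidt, u_n is a combination of f, ..., d^n f with smooth coefficients, and the d^k f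
  are holomorphic; hence d u_n lies in span {u_0, ..., u_(n+1)} and dbar u_n in span {u_0, ..., u_n}.
  Differentiating the orthonormality relations gives <u_j | d u_n> = - <dbar u_j | u_n>, which
  leaves only d u_n = p u_n + \<alpha> u_(n+1) and dbar u_n = q u_n + \<beta> u_(n-1), where
  |\<alpha>|^2 = h_(n+1) and |\<beta>|^2 = h_n. The projector 1 - |u_n><u_n| removes the u_n components, so
  \<chi>_xy = i (|\<alpha>|^2 - |\<beta>|^2) and \<chi>_xx = \<chi>_yy = |\<alpha>|^2 + |\<beta>|^2. Finally h_1 > 0 because
  <u_1 | d u_0> = <u_1 | d f> / norm f is nonzero.\<close>

section \<open>Complex inner product spaces\<close>

interpretation scaleC: vector_space "scaleC :: complex \<Rightarrow> 'a \<Rightarrow> 'a::complex_vector"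
  by unfold_locales (simp_all add: scaleC_add_right scaleC_add_left scaleC_scaleC scaleC_one)

lemma cinner_add_left: "cinner (x + y) (z::'a::complex_inner) = cinner x z + cinner y z"
  by (subst (1 2 3) cinner_conj_sym) (simp add: cinner_add_right)

lemma cinner_scaleC_left: "cinner (c *\<^sub>C x) (y::'a::complex_inner) = cnj c * cinner x y"
  by (subst (1 2) cinner_conj_sym) (simp add: cinner_scaleC_right)

lemma cinner_zero_right [simp]: "cinner x (0::'a::complex_inner) = 0"
  using cinner_scaleC_right[of x 0 x] by simp

lemma cinner_zero_left [simp]: "cinner (0::'a::complex_inner) x = 0"
  by (subst cinner_conj_sym) simp

lemma cinner_minus_right: "cinner x (- y::'a::complex_inner) = - cinner x y"
  using cinner_scaleC_right[of x "-1" y] by (simp add: scaleC.scale_minus_left scaleC_one)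

lemma cinner_minus_left: "cinner (- x) (y::'a::complex_inner) = - cinner x y"
  by (subst (1 2) cinner_conj_sym) (simp add: cinner_minus_right)

lemma cinner_diff_right: "cinner x (y - z::'a::complex_inner) = cinner x y - cinner x z"
  by (simp only: diff_conv_add_uminus cinner_add_right cinner_minus_right)

lemma cinner_diff_left: "cinner (x - y) (z::'a::complex_inner) = cinner x z - cinner y z"
  by (simp only: diff_conv_add_uminus cinner_add_left cinner_minus_left)

lemma cinner_sum_right: "cinner x (\<Sum>k\<in>A. y k) = (\<Sum>k\<in>A. cinner x (y k::'a::complex_inner))"
  by (induction A rule: infinite_finite_induct) (auto simp: cinner_add_right)

lemmas cinner_simps = cinner_add_left cinner_add_right cinner_diff_left cinner_diff_right
  cinner_minus_left cinner_minus_right cinner_scaleC_left cinner_scaleC_right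

lemma cinner_eq_zero_sym: "cinner x y = 0 \<longleftrightarrow> cinner y (x::'a::complex_inner) = 0"
  by (metis cinner_conj_sym complex_cnj_zero_iff)

lemma cinner_self: "cinner x (x::'a::complex_inner) = complex_of_real ((norm x)\<^sup>2)"
proof -
  have "Im (cinner x x) = 0"
    by (metis cinner_conj_sym cnj.sel(2) neg_equal_zero)
  moreover have "(norm x)\<^sup>2 = Re (cinner x x)"
    using cinner_nonneg[of x] by (simp add: norm_eq_sqrt_cinner)
  ultimately show ?thesis by (simp add: complex_eq_iff)
qed

lemma norm_scaleC: "norm (c *\<^sub>C (x::'a::complex_inner)) = cmod c * norm x"
proof -
  have "complex_of_real ((norm (c *\<^sub>C x))\<^sup>2) = cinner (c *\<^sub>C x) (c *\<^sub>C x)"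
    by (rule cinner_self[symmetric])
  also have "\<dots> = cnj c * c * cinner x x"
    by (simp add: cinner_simps)
  also have "\<dots> = complex_of_real ((cmod c * norm x)\<^sup>2)"
  proof -
    have "cnj c * c = complex_of_real ((cmod c)\<^sup>2)"
      by (metis complex_norm_square mult.commute of_real_power)
    then show ?thesis by (simp only: cinner_self power_mult_distrib of_real_mult)
  qed
  finally show ?thesis
    by (simp only: of_real_eq_iff power2_eq_iff_nonneg norm_ge_zero zero_le_mult_iff) simp
qed

lemma norm_cinner_le: "cmod (cinner x (y::'a::complex_inner)) \<le> norm x * norm y"
proof (cases "y = 0")
  case False
  define a where "a = cinner y x"
  define N where "N = (norm y)\<^sup>2"
  define t where "t = a / complex_of_real N"
  have N: "N > 0" using False by (simp add: N_def)
  have yy: "cinner y y = complex_of_real N" unfolding N_def by (rule cinner_self)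
  have xy: "cinner x y = cnj a" unfolding a_def by (rule cinner_conj_sym)
  \<comment> \<open>The residual of x after projecting onto y has nonnegative square norm.\<close>
  have "0 \<le> Re (cinner (x - t *\<^sub>C y) (x - t *\<^sub>C y))" by (rule cinner_nonneg)
  also have "cinner (x - t *\<^sub>C y) (x - t *\<^sub>C y)
      = cinner x x - t * cinner x y - cnj t * cinner y x + cnj t * t * cinner y y"
    by (simp only: cinner_simps) (simp add: algebra_simps)
  also have "\<dots> = cinner x x - complex_of_real ((cmod a)\<^sup>2 / N)"
    using N complex_norm_square[of a] by (simp add: t_def yy xy a_def[symmetric] field_simps)
  finally have "(cmod a)\<^sup>2 \<le> (norm x)\<^sup>2 * N"
    using N by (simp add: cinner_self field_simps)
  then have "(cmod (cinner x y))\<^sup>2 \<le> (norm x * norm y)\<^sup>2"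
    by (simp add: xy N_def power_mult_distrib)
  then show ?thesis by (simp add: abs_le_square_iff)
qed simp

lemma bounded_bilinear_cinner: "bounded_bilinear (cinner :: 'a::complex_inner \<Rightarrow> 'a \<Rightarrow> complex)"
proof
  fix a a' b b' :: 'a and r :: real
  show "cinner (a + a') b = cinner a b + cinner a' b" by (rule cinner_add_left)
  show "cinner a (b + b') = cinner a b + cinner a b'" by (rule cinner_add_right)
  show "cinner (r *\<^sub>R a) b = r *\<^sub>R cinner a b" "cinner a (r *\<^sub>R b) = r *\<^sub>R cinner a b"
    by (simp_all add: scaleR_scaleC cinner_simps scaleC_complex_def)
  show "\<exists>K. \<forall>a b. norm (cinner a (b::'a)) \<le> norm a * norm b * K"
    by (rule exI[of _ 1]) (simp add: norm_cinner_le)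
qed

lemma bounded_bilinear_scaleC: "bounded_bilinear (scaleC :: complex \<Rightarrow> 'a::complex_inner \<Rightarrow> 'a)"
proof
  fix a a' :: complex and b b' :: 'a and r :: real
  show "(a + a') *\<^sub>C b = a *\<^sub>C b + a' *\<^sub>C b" by (rule scaleC_add_left)
  show "a *\<^sub>C (b + b') = a *\<^sub>C b + a *\<^sub>C b'" by (rule scaleC_add_right)
  show "(r *\<^sub>R a) *\<^sub>C b = r *\<^sub>R (a *\<^sub>C b)" "a *\<^sub>C (r *\<^sub>R b) = r *\<^sub>R (a *\<^sub>C b)"
    by (simp_all add: scaleR_scaleC scaleC_scaleC scaleC_complex_def mult.commute)
  show "\<exists>K. \<forall>a b. norm (a *\<^sub>C (b::'a)) \<le> norm a * norm b * K"
    by (rule exI[of _ 1]) (simp add: norm_scaleC)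
qed

lemma norm_le_if_cinner_le:
  assumes "\<And>v. norm v = 1 \<Longrightarrow> cmod (cinner v x) \<le> C" and "C \<ge> 0"
  shows "norm (x::'a::complex_inner) \<le> C"
proof (cases "x = 0")
  case False
  define v where "v = complex_of_real (1 / norm x) *\<^sub>C x"
  have "norm v = 1"
    using False by (simp add: v_def norm_scaleC norm_divide)
  have "cinner v x = complex_of_real (1 / norm x) * complex_of_real ((norm x)\<^sup>2)"
    by (simp add: v_def cinner_scaleC_left cinner_self)
  also have "\<dots> = complex_of_real (norm x)"
    using False by (simp add: power2_eq_square)
  finally have "norm x = cmod (cinner v x)"
    by simp
  also have "\<dots> \<le> C"
    by (rule assms(1)) fact
  finally show ?thesis .
qed (use assms in simp)

lemma unit_scaleC_normalize:
  assumes "w \<noteq> 0"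
  shows "cinner (complex_of_real (1 / norm w) *\<^sub>C w) (complex_of_real (1 / norm w) *\<^sub>C w) = 1"
    and "cinner (complex_of_real (1 / norm w) *\<^sub>C w) (w::'a::complex_inner) = complex_of_real (norm w)"
  using assms by (simp_all only: cinner_scaleC_left cinner_scaleC_right)
    (simp_all add: cinner_self power2_eq_square)

lemma scaleC_add_self: "x + x = (2::complex) *\<^sub>C (x::'a::complex_vector)"
  using scaleC_add_left[of 1 1 x] by (simp add: scaleC_one)

lemma differentiable_cinner:
  "x differentiable (at z) \<Longrightarrow> y differentiable (at z) \<Longrightarrow> (\<lambda>z. cinner (x z) (y z)) differentiable (at z)"
  unfolding differentiable_def using bounded_bilinear.FDERIV[OF bounded_bilinear_cinner] by blast

lemma differentiable_inverse_norm:
  fixes w :: "complex \<Rightarrow> 'a::complex_inner"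
  assumes w: "w differentiable (at z)" "w z \<noteq> 0"
  shows "(\<lambda>z. complex_of_real (1 / norm (w z))) differentiable (at z)"
proof -
  define r where "r z = Re (cinner (w z) (w z))" for z
  have "(\<lambda>z. cinner (w z) (w z)) differentiable (at z)"
    using w(1) w(1) by (rule differentiable_cinner)
  then have "(Re \<circ> (\<lambda>z. cinner (w z) (w z))) differentiable (at z)"
    by (rule differentiable_chain_at) (rule bounded_linear_imp_differentiable[OF bounded_linear_Re])
  then have r: "r differentiable (at z)"
    by (simp add: r_def[abs_def] o_def)
  have "r z > 0" using w(2) by (simp add: r_def cinner_self)
  then have "(\<lambda>t. complex_of_real (1 / sqrt t)) differentiable (at (r z))"
    by (auto intro!: derivative_eq_intros simp: differentiable_def has_field_derivative_def[symmetric])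
  from differentiable_chain_at[OF r this] show ?thesis
    by (simp add: o_def r_def norm_eq_sqrt_cinner)
qed

section \<open>Wirtinger derivatives\<close>

definition Dzb :: "(complex \<Rightarrow> 'H::complex_inner) \<Rightarrow> complex \<Rightarrow> 'H" where
  "Dzb u z = (1/2) *\<^sub>C (dX u z + \<i> *\<^sub>C dY u z)"

lemma dX_dY_of_has_derivative:
  assumes "(u has_derivative D) (at z)"
  shows "dX u z = D 1" "dY u z = D \<i>"
proof -
  have lin: "linear D" using assms has_derivative_linear by blast
  have "((\<lambda>t::real. u (z + t *\<^sub>R c)) has_vector_derivative D c) (at 0)" for c
  proof -
    have "((\<lambda>t::real. z + t *\<^sub>R c) has_derivative (\<lambda>t. t *\<^sub>R c)) (at 0)"
      by (auto intro!: derivative_eq_intros)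
    from diff_chain_at[OF this] have "((u \<circ> (\<lambda>t. z + t *\<^sub>R c)) has_derivative (\<lambda>t. D (t *\<^sub>R c))) (at 0)"
      using assms by (simp add: o_def)
    then show ?thesis
      by (simp add: has_vector_derivative_def o_def linear_scale[OF lin])
  qed
  from this[of 1] this[of \<i>] show "dX u z = D 1" "dY u z = D \<i>"
    unfolding dX_def dY_def by (simp_all add: vector_derivative_at scaleR_conv_of_real mult.commute)
qed

lemma Dz_of_has_derivative:
  "(u has_derivative D) (at z) \<Longrightarrow> Dz u z = (1/2) *\<^sub>C (D 1 - \<i> *\<^sub>C D \<i>)"
  by (simp add: Dz_def dX_dY_of_has_derivative)

lemma Dzb_of_has_derivative:
  "(u has_derivative D) (at z) \<Longrightarrow> Dzb u z = (1/2) *\<^sub>C (D 1 + \<i> *\<^sub>C D \<i>)"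
  by (simp add: Dzb_def dX_dY_of_has_derivative)

lemma Dz_complex_derivative:
  assumes "(u has_derivative (\<lambda>h. h *\<^sub>C d)) (at z)"
  shows "Dz u z = d"
proof -
  have "Dz u z = ((1/2) * (1 - \<i> * \<i>)) *\<^sub>C d"
    by (simp only: Dz_of_has_derivative[OF assms] scaleC_scaleC scaleC.scale_left_diff_distrib[symmetric])
  then show ?thesis by (simp add: scaleC_one)
qed

lemma dX_eq_Dz_plus_Dzb: "dX u z = Dz u z + Dzb u z"
proof -
  have "Dz u z + Dzb u z = (1/2) *\<^sub>C (dX u z + dX u z)"
    by (simp add: Dz_def Dzb_def scaleC.scale_right_distrib[symmetric])
  also have "\<dots> = dX u z"
    by (simp add: scaleC_add_self scaleC_scaleC scaleC_one)
  finally show ?thesis ..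
qed

lemma dY_eq_Dz_minus_Dzb: "dY u z = \<i> *\<^sub>C (Dz u z - Dzb u z)"
proof -
  have "\<i> *\<^sub>C (Dz u z - Dzb u z) = (\<i> / 2) *\<^sub>C (- (\<i> *\<^sub>C dY u z) - \<i> *\<^sub>C dY u z)"
    by (simp add: Dz_def Dzb_def scaleC.scale_right_diff_distrib[symmetric] scaleC_scaleC)
  also have "- (\<i> *\<^sub>C dY u z) - \<i> *\<^sub>C dY u z = - (2 *\<^sub>C \<i> *\<^sub>C dY u z)"
    by (metis minus_add_distrib diff_conv_add_uminus scaleC_add_self)
  also have "(\<i> / 2) *\<^sub>C \<dots> = dY u z"
    by (simp add: scaleC.scale_minus_right scaleC_scaleC scaleC_one)
  finally show ?thesis ..
qed

lemma cinner_Dz_eq_minus_Dzb: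
  assumes x: "x differentiable (at z)" and y: "y differentiable (at z)"
    and const: "\<And>w. cinner (x w) (y w) = c"
  shows "cinner (x z) (Dz y z) = - cinner (Dzb x z) (y z)"
proof -
  obtain Dx Dy where Dx: "(x has_derivative Dx) (at z)" and Dy: "(y has_derivative Dy) (at z)"
    using x y unfolding differentiable_def by blast
  have "((\<lambda>w. cinner (x w) (y w)) has_derivative (\<lambda>h. cinner (x z) (Dy h) + cinner (Dx h) (y z))) (at z)"
    by (rule bounded_bilinear.FDERIV[OF bounded_bilinear_cinner Dx Dy])
  moreover have "((\<lambda>w. cinner (x w) (y w)) has_derivative (\<lambda>h. 0)) (at z)"
    using const by simp
  ultimately have "(\<lambda>h. cinner (x z) (Dy h) + cinner (Dx h) (y z)) = (\<lambda>h. 0)"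
    by (rule has_derivative_unique)
  then have "cinner (x z) (Dy h) + cinner (Dx h) (y z) = 0" for h
    by (rule fun_cong)
  then have "cinner (x z) (Dy h) = - cinner (Dx h) (y z)" for h
    by (simp add: eq_neg_iff_add_eq_0)
  then show ?thesis
    unfolding Dz_of_has_derivative[OF Dy] Dzb_of_has_derivative[OF Dx]
    by (simp add: cinner_simps algebra_simps)
qed

lemma cinner_Dzb_eq_minus_Dz:
  assumes "x differentiable (at z)" and "y differentiable (at z)"
    and "\<And>w. cinner (x w) (y w) = c"
  shows "cinner (x z) (Dzb y z) = - cinner (Dz x z) (y z)"
proof -
  have "cinner (y w) (x w) = cnj c" for w
    using assms(3)[of w] cinner_conj_sym[of "y w" "x w"] by simp
  then have swap: "cinner (y z) (Dz x z) = - cinner (Dzb y z) (x z)"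
    by (rule cinner_Dz_eq_minus_Dzb[OF assms(2,1)])
  have "cinner (x z) (Dzb y z) = cnj (cinner (Dzb y z) (x z))"
    by (rule cinner_conj_sym)
  also have "\<dots> = cnj (- cinner (y z) (Dz x z))"
    using swap by simp
  also have "\<dots> = - cinner (Dz x z) (y z)"
    by (simp add: cinner_conj_sym[of "Dz x z"])
  finally show ?thesis .
qed

lemma Omega_trg_of_Wirtinger_decomposition:
  fixes u :: "complex \<Rightarrow> 'H::complex_inner"
  assumes o: "cinner (u z) (u z) = 1" "cinner e1 e1 = 1" "cinner e2 e2 = 1"
    "cinner (u z) e1 = 0" "cinner (u z) e2 = 0" "cinner e1 e2 = 0"
    and a: "Dz u z = p *\<^sub>C u z + \<alpha> *\<^sub>C e1" and b: "Dzb u z = q *\<^sub>C u z + \<beta> *\<^sub>C e2"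
  shows "Omega u z = 2 * ((cmod \<alpha>)\<^sup>2 - (cmod \<beta>)\<^sup>2)"
    and "trg u z = 2 * ((cmod \<alpha>)\<^sup>2 + (cmod \<beta>)\<^sup>2)"
proof -
  have o': "cinner e1 (u z) = 0" "cinner e2 (u z) = 0" "cinner e2 e1 = 0"
    using o cinner_eq_zero_sym by blast+
  have sq: "c * cnj c = complex_of_real ((cmod c)\<^sup>2)" for c
    by (metis complex_norm_square of_real_power)
  have "chi dX dY u z = \<i> * (\<alpha> * cnj \<alpha> - \<beta> * cnj \<beta>)"
    and "chi dX dX u z = \<alpha> * cnj \<alpha> + \<beta> * cnj \<beta>"
    and "chi dY dY u z = \<alpha> * cnj \<alpha> + \<beta> * cnj \<beta>"
    unfolding chi_def dX_eq_Dz_plus_Dzb dY_eq_Dz_minus_Dzb a b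
    by (simp_all only: cinner_simps o o') (simp_all add: algebra_simps)
  then show "Omega u z = 2 * ((cmod \<alpha>)\<^sup>2 - (cmod \<beta>)\<^sup>2)"
    and "trg u z = 2 * ((cmod \<alpha>)\<^sup>2 + (cmod \<beta>)\<^sup>2)"
    by (simp_all add: Omega_def trg_def sq)
qed

lemma Dz_scaleC:
  fixes x :: "complex \<Rightarrow> 'H::complex_inner"
  assumes a: "a differentiable (at z)" and x: "x differentiable (at z)"
  shows "Dz (\<lambda>w. a w *\<^sub>C x w) z = a z *\<^sub>C Dz x z + Dz a z *\<^sub>C x z"
proof -
  obtain Da Dx where Da: "(a has_derivative Da) (at z)" and Dx: "(x has_derivative Dx) (at z)"
    using a x unfolding differentiable_def by blast
  have "((\<lambda>w. a w *\<^sub>C x w) has_derivative (\<lambda>h. a z *\<^sub>C Dx h + Da h *\<^sub>C x z)) (at z)"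
    by (rule bounded_bilinear.FDERIV[OF bounded_bilinear_scaleC Da Dx])
  from Dz_of_has_derivative[OF this] show ?thesis
    unfolding Dz_of_has_derivative[OF Da] Dz_of_has_derivative[OF Dx]
    by (simp add: scaleC_complex_def scaleC_add_right scaleC_add_left scaleC.scale_right_diff_distrib
        scaleC.scale_left_diff_distrib scaleC_scaleC algebra_simps)
qed

section \<open>Derivatives of holomorphic Hilbert-space-valued maps\<close>

lemma has_field_derivative_cinner_right:
  assumes "(g has_derivative (\<lambda>h. h *\<^sub>C d)) (at w)"
  shows "((\<lambda>w. cinner v (g w)) has_field_derivative cinner v d) (at w)"
proof -
  have "((\<lambda>w. cinner v (g w)) has_derivative (\<lambda>h. cinner v (h *\<^sub>C d) + cinner 0 (g w))) (at w)"
    by (rule bounded_bilinear.FDERIV[OF bounded_bilinear_cinner has_derivative_const assms])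
  then show ?thesis
    by (simp add: has_field_derivative_def cinner_scaleC_right mult_commute_abs)
qed

lemma Cauchy_third_deriv_bound:
  fixes \<phi> :: "complex \<Rightarrow> complex"
  assumes hol: "\<phi> holomorphic_on UNIV"
    and bound: "\<And>y. y \<in> cball z0 2 \<Longrightarrow> cmod (\<phi> y) \<le> M"
    and w: "w \<in> ball z0 1"
  shows "cmod ((deriv ^^ 3) \<phi> w) \<le> 6 * (M + 1)"
proof -
  have "cmod ((deriv ^^ 3) \<phi> w) \<le> fact 3 * (M + 1) / 1 ^ 3"
  proof (rule Cauchy_higher_deriv_bound)
    show "\<phi> holomorphic_on ball w 1" "continuous_on (cball w 1) \<phi>"
      using hol holomorphic_on_imp_continuous_on by (auto intro: holomorphic_on_subset continuous_on_subset)
    fix y assume "y \<in> ball w 1"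
    then have "y \<in> cball z0 2"
      using w dist_triangle[of z0 y w] by (auto simp: dist_commute)
    then show "\<phi> y \<in> ball 0 (M + 1)"
      using bound by (fastforce simp: dist_norm)
  qed auto
  then show ?thesis
    by (simp add: numeral_3_eq_3)
qed

lemma deriv_Taylor_bound:
  fixes \<phi> :: "complex \<Rightarrow> complex"
  assumes hol: "\<phi> holomorphic_on UNIV"
    and bound: "\<And>y. y \<in> cball z0 2 \<Longrightarrow> cmod (\<phi> y) \<le> M"
    and h: "cmod h < 1"
  shows "cmod (deriv \<phi> (z0 + h) - deriv \<phi> z0 - h * (deriv ^^ 2) \<phi> z0) \<le> 6 * (M + 1) * (cmod h)\<^sup>2"
proof -
  define B where "B = 6 * (M + 1)"
  define \<phi>1 \<phi>2 where "\<phi>1 = deriv \<phi>" and "\<phi>2 = deriv \<phi>1"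
  have hol1: "\<phi>1 holomorphic_on UNIV" and hol2: "\<phi>2 holomorphic_on UNIV"
    unfolding \<phi>1_def \<phi>2_def by (simp_all add: holomorphic_deriv hol)
  have d1: "(\<phi>1 has_field_derivative \<phi>2 w) (at w within S)" for w S
    unfolding \<phi>2_def by (rule holomorphic_derivI[OF hol1]) auto
  have d2: "(\<phi>2 has_field_derivative deriv \<phi>2 w) (at w within S)" for w S
    by (rule holomorphic_derivI[OF hol2]) auto
  have "0 \<le> M"
    using bound[of z0] by (metis centre_in_cball norm_ge_zero order_trans zero_le_numeral)
  have b2: "cmod (\<phi>2 w - \<phi>2 z0) \<le> B * cmod h" if "w \<in> cball z0 (cmod h)" for w
  proof -
    have "cmod (\<phi>2 w - \<phi>2 z0) \<le> B * cmod (w - z0)"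
    proof (rule field_differentiable_bound[where S="ball z0 1" and f'="deriv \<phi>2"])
      show "cmod (deriv \<phi>2 y) \<le> B" if "y \<in> ball z0 1" for y
        using Cauchy_third_deriv_bound[OF hol bound that]
        by (simp add: B_def \<phi>2_def \<phi>1_def numeral_3_eq_3)
    qed (use that h d2 in \<open>auto simp: dist_norm\<close>)
    also have "\<dots> \<le> B * cmod h"
      using that \<open>0 \<le> M\<close> by (intro mult_left_mono) (auto simp: B_def dist_norm norm_minus_commute)
    finally show ?thesis .
  qed
  define F where "F w = \<phi>1 w - \<phi>1 z0 - (w - z0) * \<phi>2 z0" for w
  have "cmod (F (z0 + h) - F z0) \<le> (B * cmod h) * cmod (z0 + h - z0)"
    by (rule field_differentiable_bound[where S="cball z0 (cmod h)" and f'="\<lambda>w. \<phi>2 w - \<phi>2 z0"])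
       (auto simp: F_def dist_norm b2 intro!: derivative_eq_intros d1)
  then show ?thesis
    by (simp add: F_def \<phi>2_def \<phi>1_def B_def numeral_2_eq_2 power2_eq_square mult.assoc)
qed

lemma Cauchy_if_norm_diff_le:
  fixes s :: "nat \<Rightarrow> 'a::real_normed_vector"
  assumes le: "\<And>m n. norm (s m - s n) \<le> e m + e n" and e: "e \<longlonglongrightarrow> 0"
  shows "Cauchy s"
proof (rule CauchyI)
  fix r :: real assume "0 < r"
  then obtain N where N: "\<And>n. N \<le> n \<Longrightarrow> norm (e n - 0) < r / 2"
    using LIMSEQ_D[OF e, of "r / 2"] by auto
  have "norm (s m - s n) < r" if "N \<le> m" "N \<le> n" for m n
    using le[of m n] N[OF that(1)] N[OF that(2)] by (simp add: abs_less_iff)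
  then show "\<exists>M. \<forall>m\<ge>M. \<forall>n\<ge>M. norm (s m - s n) < r" by blast
qed

lemma exists_limit_of_Cauchy_bound:
  fixes Q :: "complex \<Rightarrow> 'a::{real_normed_vector, complete_space}"
  assumes bound: "\<And>h k. 0 < cmod h \<Longrightarrow> cmod h < 1 \<Longrightarrow> 0 < cmod k \<Longrightarrow> cmod k < 1 \<Longrightarrow>
                     norm (Q h - Q k) \<le> B * (cmod h + cmod k)"
  shows "\<exists>L. \<forall>h. 0 < cmod h \<and> cmod h < 1 \<longrightarrow> norm (Q h - L) \<le> B * cmod h"
proof -
  define t where "t n = complex_of_real (1 / real (Suc (Suc n)))" for n
  have t: "0 < cmod (t n)" "cmod (t n) < 1" for n
    unfolding t_def norm_of_real by (simp_all add: field_simps)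
  have "(\<lambda>n. 1 / real (Suc (Suc n))) \<longlonglongrightarrow> 0"
    using LIMSEQ_Suc[OF LIMSEQ_Suc[OF lim_inverse_n']] by simp
  then have t0: "(\<lambda>n. cmod (t n)) \<longlonglongrightarrow> 0"
    unfolding t_def norm_of_real by simp
  have "Cauchy (\<lambda>n. Q (t n))"
  proof (rule Cauchy_if_norm_diff_le)
    show "norm (Q (t m) - Q (t n)) \<le> B * cmod (t m) + B * cmod (t n)" for m n
      using bound[OF t t] by (simp add: distrib_left)
    show "(\<lambda>n. B * cmod (t n)) \<longlonglongrightarrow> 0"
      using tendsto_mult_right_zero[OF t0] by simp
  qed
  then obtain L where L: "(\<lambda>n. Q (t n)) \<longlonglongrightarrow> L"
    using Cauchy_convergent_iff convergent_def by blast
  have "norm (Q h - L) \<le> B * cmod h" if h: "0 < cmod h" "cmod h < 1" for h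
  proof -
    have "(\<lambda>n. norm (Q h - Q (t n))) \<longlonglongrightarrow> norm (Q h - L)"
      by (intro tendsto_intros L)
    moreover have "(\<lambda>n. B * (cmod h + cmod (t n))) \<longlonglongrightarrow> B * (cmod h + 0)"
      by (intro tendsto_intros t0)
    ultimately show ?thesis
      using bound[OF h t] by (simp add: LIMSEQ_le)
  qed
  then show ?thesis by blast
qed

lemma has_derivative_of_quotient_bound:
  fixes g :: "complex \<Rightarrow> 'a::complex_inner"
  assumes "\<And>h. 0 < cmod h \<Longrightarrow> cmod h < 1 \<Longrightarrow> norm ((1/h) *\<^sub>C (g (z0 + h) - g z0) - d) \<le> B * cmod h"
  shows "(g has_derivative (\<lambda>h. h *\<^sub>C d)) (at z0)"
proof (subst has_derivative_at, intro conjI)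
  show "bounded_linear (\<lambda>h. h *\<^sub>C d)"
    by (rule bounded_bilinear.bounded_linear_left[OF bounded_bilinear_scaleC])
  show "(\<lambda>h. norm (g (z0 + h) - g z0 - h *\<^sub>C d) / norm h) \<midarrow>0\<rightarrow> 0"
  proof (rule Lim_null_comparison)
    show "((\<lambda>h. B * cmod h) \<longlongrightarrow> 0) (at 0)"
      by (auto intro!: tendsto_eq_intros)
    have "eventually (\<lambda>h. 0 < cmod h \<and> cmod h < 1) (at (0::complex))"
      unfolding eventually_at by (intro exI[of _ 1]) (auto simp: dist_norm)
    then show "eventually (\<lambda>h. norm (norm (g (z0 + h) - g z0 - h *\<^sub>C d) / norm h) \<le> B * cmod h) (at 0)"
    proof (rule eventually_mono)
      fix h :: complex assume h: "0 < cmod h \<and> cmod h < 1"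
      then have "g (z0 + h) - g z0 - h *\<^sub>C d = h *\<^sub>C ((1/h) *\<^sub>C (g (z0 + h) - g z0) - d)"
        by (simp add: scaleC.scale_right_diff_distrib scaleC_scaleC scaleC_one)
      then show "norm (norm (g (z0 + h) - g z0 - h *\<^sub>C d) / norm h) \<le> B * cmod h"
        using h assms[of h] by (simp add: norm_scaleC)
    qed
  qed
qed

lemma cinner_difference_quotient_bound:
  fixes g g' :: "complex \<Rightarrow> 'a::complex_inner"
  assumes hd: "\<And>z. (g has_derivative (\<lambda>h. h *\<^sub>C g' z)) (at z)"
    and M: "\<And>y. y \<in> cball z0 2 \<Longrightarrow> norm (g y) \<le> M"
    and v: "norm v = 1" and h: "0 < cmod h" "cmod h < 1"
  shows "cmod (cinner v ((1/h) *\<^sub>C (g' (z0 + h) - g' z0)) - (deriv ^^ 2) (\<lambda>w. cinner v (g w)) z0)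
           \<le> 6 * (M + 1) * cmod h"
proof -
  define \<phi> where "\<phi> w = cinner v (g w)" for w
  have d\<phi>: "(\<phi> has_field_derivative cinner v (g' w)) (at w)" for w
    unfolding \<phi>_def by (rule has_field_derivative_cinner_right[OF hd])
  then have "\<phi> holomorphic_on UNIV"
    by (meson field_differentiable_at_within field_differentiable_def holomorphic_on_def)
  moreover have "cmod (\<phi> y) \<le> M" if "y \<in> cball z0 2" for y
    using norm_cinner_le[of v "g y"] M[OF that] v by (simp add: \<phi>_def)
  ultimately have Taylor: "cmod (deriv \<phi> (z0 + h) - deriv \<phi> z0 - h * (deriv ^^ 2) \<phi> z0)
      \<le> 6 * (M + 1) * (cmod h)\<^sup>2"
    using h by (intro deriv_Taylor_bound)
  have "deriv \<phi> = (\<lambda>w. cinner v (g' w))"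
    using d\<phi> DERIV_imp_deriv by blast
  then have "cinner v ((1/h) *\<^sub>C (g' (z0 + h) - g' z0)) - (deriv ^^ 2) \<phi> z0
      = (deriv \<phi> (z0 + h) - deriv \<phi> z0 - h * (deriv ^^ 2) \<phi> z0) / h"
    using h by (simp add: cinner_simps field_simps)
  then have "cmod (cinner v ((1/h) *\<^sub>C (g' (z0 + h) - g' z0)) - (deriv ^^ 2) \<phi> z0)
      = cmod (deriv \<phi> (z0 + h) - deriv \<phi> z0 - h * (deriv ^^ 2) \<phi> z0) / cmod h"
    by (simp add: norm_divide)
  also have "\<dots> \<le> 6 * (M + 1) * (cmod h)\<^sup>2 / cmod h"
    using Taylor h by (simp add: divide_right_mono)
  finally show ?thesis
    using h by (simp add: \<phi>_def[abs_def] power2_eq_square)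
qed

text \<open>Pairing with unit vectors gives entire scalar functions, to which Cauchy's estimates apply
  uniformly; so the difference quotients of the derivative are Cauchy.\<close>

lemma complex_derivative_has_complex_derivative:
  fixes g g' :: "complex \<Rightarrow> 'a::{complex_inner, complete_space}"
  assumes hd: "\<And>z. (g has_derivative (\<lambda>h. h *\<^sub>C g' z)) (at z)"
  shows "\<exists>d. (g' has_derivative (\<lambda>h. h *\<^sub>C d)) (at z0)"
proof -
  have "continuous_on UNIV g"
    using hd has_derivative_continuous continuous_at_imp_continuous_on by blast
  then have "bounded (g ` cball z0 2)"
    by (intro compact_imp_bounded compact_continuous_image) (auto intro: continuous_on_subset)
  then obtain M where M: "\<And>y. y \<in> cball z0 2 \<Longrightarrow> norm (g y) \<le> M"
    by (metis bounded_iff image_eqI)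
  have "0 \<le> M"
    using M[of z0] by (metis centre_in_cball norm_ge_zero order_trans zero_le_numeral)
  define B where "B = 6 * (M + 1)"
  define Q where "Q h = (1/h) *\<^sub>C (g' (z0 + h) - g' z0)" for h
  have "norm (Q h - Q k) \<le> B * (cmod h + cmod k)"
    if hk: "0 < cmod h" "cmod h < 1" "0 < cmod k" "cmod k < 1" for h k
  proof (rule norm_le_if_cinner_le)
    fix v :: 'a assume v: "norm v = 1"
    define c where "c = (deriv ^^ 2) (\<lambda>w. cinner v (g w)) z0"
    have "cinner v (Q h - Q k) = (cinner v (Q h) - c) - (cinner v (Q k) - c)"
      by (simp add: cinner_diff_right)
    then have "cmod (cinner v (Q h - Q k)) \<le> cmod (cinner v (Q h) - c) + cmod (cinner v (Q k) - c)"
      by (metis norm_triangle_ineq4)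
    also have "\<dots> \<le> B * cmod h + B * cmod k"
      unfolding c_def Q_def B_def
      by (intro add_mono cinner_difference_quotient_bound[OF hd M v]) (use hk in auto)
    finally show "cmod (cinner v (Q h - Q k)) \<le> B * (cmod h + cmod k)"
      by (simp add: distrib_left)
  next
    show "0 \<le> B * (cmod h + cmod k)"
      using \<open>0 \<le> M\<close> unfolding B_def by (intro mult_nonneg_nonneg) auto
  qed
  then obtain d where "norm (Q h - d) \<le> B * cmod h" if "0 < cmod h" "cmod h < 1" for h
    using exists_limit_of_Cauchy_bound[of Q B] by blast
  then show ?thesis
    unfolding Q_def by (blast intro: has_derivative_of_quotient_bound)
qed

lemma has_derivative_dpow:
  fixes f :: "complex \<Rightarrow> 'a::{complex_inner, complete_space}"
  assumes "hol f"
  shows "(dpow f k has_derivative (\<lambda>h. h *\<^sub>C dpow f (Suc k) z)) (at z)"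
proof (induction k arbitrary: z)
  case 0
  obtain d where "(f has_derivative (\<lambda>h. h *\<^sub>C d)) (at z)"
    using assms unfolding hol_def by blast
  then show ?case by (simp add: Dz_complex_derivative)
next
  case (Suc k)
  obtain d where "(dpow f (Suc k) has_derivative (\<lambda>h. h *\<^sub>C d)) (at z)"
    using complex_derivative_has_complex_derivative[OF Suc.IH] by blast
  then show ?case by (simp add: Dz_complex_derivative)
qed

section \<open>Gram--Schmidt orthonormalisation\<close>

abbreviation span_upto :: "(nat \<Rightarrow> 'a::complex_vector) \<Rightarrow> nat \<Rightarrow> 'a set" where
  "span_upto v m \<equiv> scaleC.span (v ` {..<m})"

lemma span_upto_iff: "x \<in> span_upto v m \<longleftrightarrow> (\<exists>c. x = (\<Sum>k<m. c k *\<^sub>C v k))"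
proof
  assume "x \<in> span_upto v m"
  then show "\<exists>c. x = (\<Sum>k<m. c k *\<^sub>C v k)"
  proof (induction rule: scaleC.span_induct)
    case base
    show ?case
    proof (rule scaleC.subspaceI)
      show "0 \<in> {x. \<exists>c. x = (\<Sum>k<m. c k *\<^sub>C v k)}"
        by (auto intro!: exI[of _ "\<lambda>_. 0"])
    next
      fix x y assume "x \<in> {x. \<exists>c. x = (\<Sum>k<m. c k *\<^sub>C v k)}" "y \<in> {x. \<exists>c. x = (\<Sum>k<m. c k *\<^sub>C v k)}"
      then obtain c d where "x = (\<Sum>k<m. c k *\<^sub>C v k)" "y = (\<Sum>k<m. d k *\<^sub>C v k)" by blast
      then show "x + y \<in> {x. \<exists>c. x = (\<Sum>k<m. c k *\<^sub>C v k)}"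
        by (auto simp: scaleC_add_left sum.distrib intro!: exI[of _ "\<lambda>k. c k + d k"])
    next
      fix a x assume "x \<in> {x. \<exists>c. x = (\<Sum>k<m. c k *\<^sub>C v k)}"
      then obtain c where "x = (\<Sum>k<m. c k *\<^sub>C v k)" by blast
      then show "a *\<^sub>C x \<in> {x. \<exists>c. x = (\<Sum>k<m. c k *\<^sub>C v k)}"
        by (auto simp: scaleC.scale_sum_right scaleC_scaleC intro!: exI[of _ "\<lambda>k. a * c k"])
    qed
  next
    case (step x)
    then obtain j where j: "j < m" "x = v j" by auto
    have "x = (\<Sum>k<m. (if k = j then 1 else 0) *\<^sub>C v k)"
      using j by (simp add: if_distrib[of "\<lambda>c. c *\<^sub>C _"] scaleC_one sum.delta cong: if_cong)
    then show ?case by (rule exI[where x="\<lambda>k. if k = j then 1 else 0"])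
  qed
next
  assume "\<exists>c. x = (\<Sum>k<m. c k *\<^sub>C v k)"
  then obtain c where "x = (\<Sum>k<m. c k *\<^sub>C v k)" ..
  also have "\<dots> \<in> span_upto v m"
    by (intro scaleC.span_sum scaleC.span_scale scaleC.span_base) auto
  finally show "x \<in> span_upto v m" .
qed

lemma span_upto_base: "k < m \<Longrightarrow> v k \<in> span_upto v m"
  by (simp add: scaleC.span_base)

lemma span_upto_mono: "m \<le> m' \<Longrightarrow> span_upto v m \<subseteq> span_upto v m'"
  by (intro scaleC.span_mono image_mono) auto

lemma cinner_span_upto_eq_0:
  assumes "\<And>j. j < m \<Longrightarrow> cinner y (v j) = 0" and "x \<in> span_upto v m"
  shows "cinner y x = 0"
  using assms by (auto simp: span_upto_iff cinner_sum_right cinner_scaleC_right)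

lemma lin_indep_upto_not_in_span:
  assumes "lin_indep_upto v n"
  shows "v n \<notin> span_upto v n"
proof
  assume "v n \<in> span_upto v n"
  then obtain c where c: "v n = (\<Sum>k<n. c k *\<^sub>C v k)"
    by (auto simp: span_upto_iff)
  define c' where "c' = c(n := -1)"
  have "(\<Sum>k\<le>n. c' k *\<^sub>C v k) = (\<Sum>k<n. c k *\<^sub>C v k) - v n"
    by (simp add: c'_def lessThan_Suc_atMost[symmetric] scaleC.scale_minus_left scaleC_one)
  then have "(\<Sum>k\<le>n. c' k *\<^sub>C v k) = 0"
    using c by simp
  then show False
    using assms unfolding lin_indep_upto_def by (metis c'_def fun_upd_same order_refl zero_neq_neg_one)
qed

definition orthonormal_upto :: "(nat \<Rightarrow> 'a::complex_inner) \<Rightarrow> nat \<Rightarrow> bool" where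
  "orthonormal_upto e n \<longleftrightarrow> (\<forall>i<n. \<forall>j<n. cinner (e i) (e j) = (if i = j then 1 else 0))"

lemma cinner_orthonormal_sum:
  assumes "orthonormal_upto e n" and "j < n"
  shows "cinner (e j) (\<Sum>i<n. c i *\<^sub>C e i) = c j"
proof -
  have "cinner (e j) (\<Sum>i<n. c i *\<^sub>C e i) = (\<Sum>i<n. c i * (if j = i then 1 else 0))"
    using assms by (simp add: orthonormal_upto_def cinner_sum_right cinner_scaleC_right)
  also have "\<dots> = (\<Sum>i<n. if j = i then c i else 0)"
    by (rule sum.cong) auto
  finally show ?thesis
    using assms(2) by simp
qed

lemma orthonormal_upto_expand:
  assumes "orthonormal_upto e n" and "x \<in> span_upto e n"
  shows "x = (\<Sum>j<n. cinner (e j) x *\<^sub>C e j)"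
proof -
  obtain c where c: "x = (\<Sum>k<n. c k *\<^sub>C e k)"
    using assms(2) by (auto simp: span_upto_iff)
  then show ?thesis
    using cinner_orthonormal_sum[OF assms(1)] by (auto intro: sum.cong)
qed

text \<open>Written exactly like Pn, so that LL unfolds to gram_schmidt.\<close>

definition orth_proj :: "(nat \<Rightarrow> 'a::complex_inner) \<Rightarrow> nat \<Rightarrow> 'a \<Rightarrow> 'a" where
  "orth_proj v n x = (THE p. (\<exists>c. p = (\<Sum>k<n. c k *\<^sub>C v k)) \<and> (\<forall>k<n. cinner (v k) (x - p) = 0))"

lemma orth_proj_eq:
  assumes e: "orthonormal_upto e n" and span: "span_upto e n = span_upto v n"
  shows "orth_proj v n x = (\<Sum>j<n. cinner (e j) x *\<^sub>C e j)"
  unfolding orth_proj_def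
proof (rule the_equality)
  define p where "p = (\<Sum>j<n. cinner (e j) x *\<^sub>C e j)"
  have p: "p \<in> span_upto v n"
    unfolding p_def span[symmetric] by (intro scaleC.span_sum scaleC.span_scale span_upto_base) auto
  have "cinner (e j) (x - p) = 0" if "j < n" for j
    using that cinner_orthonormal_sum[OF e] by (simp add: p_def cinner_diff_right)
  then have "cinner (x - p) (e j) = 0" if "j < n" for j
    using that cinner_eq_zero_sym by blast
  then have perp: "cinner y (x - p) = 0" if "y \<in> span_upto v n" for y
    using that cinner_eq_zero_sym unfolding span[symmetric] by (metis cinner_span_upto_eq_0)
  then show "(\<exists>c. p = (\<Sum>k<n. c k *\<^sub>C v k)) \<and> (\<forall>k<n. cinner (v k) (x - p) = 0)"
    using p by (auto simp: span_upto_iff[symmetric] span_upto_base)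
  fix q assume q: "(\<exists>c. q = (\<Sum>k<n. c k *\<^sub>C v k)) \<and> (\<forall>k<n. cinner (v k) (x - q) = 0)"
  \<comment> \<open>p - q lies in the span and is orthogonal to it.\<close>
  have "cinner (p - q) (v k) = 0" if "k < n" for k
  proof -
    have "cinner (v k) (p - q) = cinner (v k) (x - q) - cinner (v k) (x - p)"
      by (simp add: cinner_diff_right)
    also have "\<dots> = 0"
      using q that perp[OF span_upto_base[OF that]] by simp
    finally show ?thesis
      using cinner_eq_zero_sym by blast
  qed
  moreover have "p - q \<in> span_upto v n"
    using p q by (auto simp: span_upto_iff[symmetric] intro: scaleC.span_diff)
  ultimately have "cinner (p - q) (p - q) = 0"
    by (rule cinner_span_upto_eq_0[where v=v and m=n])
  then show "q = p" by (simp add: cinner_eq_zero_iff)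
qed

definition gram_schmidt :: "(nat \<Rightarrow> 'a::complex_inner) \<Rightarrow> nat \<Rightarrow> 'a" where
  "gram_schmidt v n = (let w = v n - orth_proj v n (v n) in complex_of_real (1 / norm w) *\<^sub>C w)"

lemma LL_eq_gram_schmidt: "LL f n z = gram_schmidt (\<lambda>k. dpow f k z) n"
  by (simp add: LL_def gram_schmidt_def Pn_def orth_proj_def)

lemma gram_schmidt_step:
  assumes e: "orthonormal_upto (gram_schmidt v) n"
    and span: "span_upto (gram_schmidt v) n = span_upto v n"
    and indep: "v n \<notin> span_upto v n"
  defines "w \<equiv> v n - (\<Sum>j<n. cinner (gram_schmidt v j) (v n) *\<^sub>C gram_schmidt v j)"
  shows "w \<noteq> 0" and "gram_schmidt v n = complex_of_real (1 / norm w) *\<^sub>C w"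
proof -
  have "(\<Sum>j<n. cinner (gram_schmidt v j) (v n) *\<^sub>C gram_schmidt v j) \<in> span_upto v n"
    unfolding span[symmetric] by (intro scaleC.span_sum scaleC.span_scale span_upto_base) auto
  then show "w \<noteq> 0"
    using indep by (auto simp: w_def)
  show "gram_schmidt v n = complex_of_real (1 / norm w) *\<^sub>C w"
    unfolding w_def gram_schmidt_def[of v n] Let_def orth_proj_eq[OF e span] ..
qed

lemma orthonormal_upto_Suc:
  assumes "orthonormal_upto e n" and "\<And>j. j < n \<Longrightarrow> cinner (e j) (e n) = 0"
    and "cinner (e n) (e n) = 1"
  shows "orthonormal_upto e (Suc n)"
  using assms unfolding orthonormal_upto_def by (auto simp: less_Suc_eq cinner_eq_zero_sym)

lemma span_upto_Suc_eq:
  assumes span: "span_upto e n = span_upto v n" and p: "p \<in> span_upto v n"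
    and e: "e n = a *\<^sub>C (v n - p)" and v: "v n = p + b *\<^sub>C e n"
  shows "span_upto e (Suc n) = span_upto v (Suc n)"
proof -
  have "e j \<in> span_upto v (Suc n) \<and> v j \<in> span_upto e (Suc n)" if "j < Suc n" for j
  proof (cases "j < n")
    case True
    then show ?thesis
      using span span_upto_base[OF True] span_upto_mono[of n "Suc n"] by auto
  next
    case False
    with that have j: "j = n" by simp
    have "e n \<in> span_upto v (Suc n)"
      unfolding e using p span_upto_mono[of n "Suc n" v]
      by (intro scaleC.span_scale scaleC.span_diff) (auto simp: span_upto_base)
    moreover have "v n \<in> span_upto e (Suc n)"
      unfolding v using p span span_upto_mono[of n "Suc n" e]
      by (intro scaleC.span_add scaleC.span_scale) (auto simp: span_upto_base)
    ultimately show ?thesis using j by blast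
  qed
  then show ?thesis
    unfolding scaleC.span_eq by auto
qed

lemma gram_schmidt_orthonormal_span:
  assumes indep: "\<And>n. lin_indep_upto v n"
  shows "orthonormal_upto (gram_schmidt v) n \<and> span_upto (gram_schmidt v) n = span_upto v n"
proof (induction n)
  case 0
  show ?case by (simp add: orthonormal_upto_def)
next
  case (Suc n)
  define e where "e = gram_schmidt v"
  define p where "p = (\<Sum>j<n. cinner (e j) (v n) *\<^sub>C e j)"
  define w where "w = v n - p"
  have e: "orthonormal_upto e n" and span: "span_upto e n = span_upto v n"
    using Suc.IH by (simp_all add: e_def)
  have p: "p \<in> span_upto v n"
    unfolding p_def span[symmetric] by (intro scaleC.span_sum scaleC.span_scale span_upto_base) auto
  have "w \<noteq> 0" and en: "e n = complex_of_real (1 / norm w) *\<^sub>C w"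
    using gram_schmidt_step[OF Suc.IH[THEN conjunct1] Suc.IH[THEN conjunct2]
        lin_indep_upto_not_in_span[OF indep]]
    by (simp_all add: w_def p_def e_def)
  have "orthonormal_upto e (Suc n)"
  proof (rule orthonormal_upto_Suc[OF e])
    show "cinner (e j) (e n) = 0" if "j < n" for j
      using that cinner_orthonormal_sum[OF e] by (simp add: en w_def p_def cinner_simps)
    show "cinner (e n) (e n) = 1"
      unfolding en by (rule unit_scaleC_normalize(1)[OF \<open>w \<noteq> 0\<close>])
  qed
  moreover have "v n = p + complex_of_real (norm w) *\<^sub>C e n"
    using \<open>w \<noteq> 0\<close> by (simp add: en scaleC_scaleC scaleC_one w_def)
  then have "span_upto e (Suc n) = span_upto v (Suc n)"
    by (rule span_upto_Suc_eq[OF span p en[unfolded w_def]])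
  ultimately show ?case by (simp add: e_def)
qed

context
  fixes v :: "nat \<Rightarrow> 'a::complex_inner"
  assumes indep: "\<And>n. lin_indep_upto v n"
begin

lemma cinner_gram_schmidt: "cinner (gram_schmidt v i) (gram_schmidt v j) = (if i = j then 1 else 0)"
  using gram_schmidt_orthonormal_span[OF indep, of "Suc (max i j)"]
  unfolding orthonormal_upto_def by (simp add: less_Suc_eq_le)

lemma span_upto_gram_schmidt: "span_upto (gram_schmidt v) n = span_upto v n"
  using gram_schmidt_orthonormal_span[OF indep] by blast

lemma gram_schmidt_formula:
  fixes n :: nat
  defines "w \<equiv> v n - (\<Sum>j<n. cinner (gram_schmidt v j) (v n) *\<^sub>C gram_schmidt v j)"
  shows "w \<noteq> 0" and "gram_schmidt v n = complex_of_real (1 / norm w) *\<^sub>C w"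
  unfolding w_def
  by (rule gram_schmidt_step[OF _ span_upto_gram_schmidt lin_indep_upto_not_in_span[OF indep]],
      use gram_schmidt_orthonormal_span[OF indep] in blast)+

lemma cinner_gram_schmidt_span:
  assumes "x \<in> span_upto v n"
  shows "cinner (gram_schmidt v n) x = 0"
  using assms unfolding span_upto_gram_schmidt[symmetric]
  by (rule cinner_span_upto_eq_0[rotated]) (simp add: cinner_gram_schmidt)

lemma cinner_gram_schmidt_nonzero: "cinner (gram_schmidt v n) (v n) \<noteq> 0"
proof -
  define w where "w = v n - (\<Sum>j<n. cinner (gram_schmidt v j) (v n) *\<^sub>C gram_schmidt v j)"
  have "w \<noteq> 0" and gs: "gram_schmidt v n = complex_of_real (1 / norm w) *\<^sub>C w"
    unfolding w_def by (rule gram_schmidt_formula)+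
  have "(\<Sum>j<n. cinner (gram_schmidt v j) (v n) *\<^sub>C gram_schmidt v j) \<in> span_upto v n"
    unfolding span_upto_gram_schmidt[symmetric]
    by (intro scaleC.span_sum scaleC.span_scale span_upto_base) auto
  then have "cinner (gram_schmidt v n) (v n) = cinner (gram_schmidt v n) w"
    by (simp add: w_def cinner_diff_right cinner_gram_schmidt_span)
  also have "\<dots> = complex_of_real (norm w)"
    unfolding gs by (rule unit_scaleC_normalize(2)[OF \<open>w \<noteq> 0\<close>])
  finally show ?thesis
    using \<open>w \<noteq> 0\<close> by simp
qed

end

section \<open>Smooth combinations of the derivatives of f\<close>

definition smooth_comb :: "(complex \<Rightarrow> 'H::complex_inner) \<Rightarrow> nat \<Rightarrow> (complex \<Rightarrow> 'H) \<Rightarrow> bool" where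
  "smooth_comb f m x \<longleftrightarrow> (\<exists>c. (\<forall>k<m. \<forall>z. c k differentiable (at z)) \<and>
      (\<forall>z. x z = (\<Sum>k<m. c k z *\<^sub>C dpow f k z)))"

lemma smooth_comb_dpow: "k < m \<Longrightarrow> smooth_comb f m (dpow f k)"
  unfolding smooth_comb_def
  by (rule exI[of _ "\<lambda>j z. if j = k then 1 else 0"])
     (simp add: if_distrib[of "\<lambda>c. c *\<^sub>C _"] scaleC_one sum.delta cong: if_cong)

lemma smooth_comb_add: "smooth_comb f m x \<Longrightarrow> smooth_comb f m y \<Longrightarrow> smooth_comb f m (\<lambda>z. x z + y z)"
  unfolding smooth_comb_def
  by (elim exE conjE, rule_tac x="\<lambda>k z. c k z + ca k z" in exI)
     (auto simp: scaleC_add_left sum.distrib intro!: differentiable_add)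

lemma smooth_comb_scale:
  "(\<And>z. a differentiable (at z)) \<Longrightarrow> smooth_comb f m x \<Longrightarrow> smooth_comb f m (\<lambda>z. a z *\<^sub>C x z)"
  unfolding smooth_comb_def
  by (elim exE conjE, rule_tac x="\<lambda>k z. a z * c k z" in exI)
     (auto simp: scaleC.scale_sum_right scaleC_scaleC intro!: differentiable_mult)

lemma smooth_comb_diff: "smooth_comb f m x \<Longrightarrow> smooth_comb f m y \<Longrightarrow> smooth_comb f m (\<lambda>z. x z - y z)"
  using smooth_comb_add[of f m x "\<lambda>z. (- 1) *\<^sub>C y z"] smooth_comb_scale[of "\<lambda>_. - 1" f m y]
  by (simp add: scaleC.scale_minus_left scaleC_one)

lemma smooth_comb_sum:
  "(\<And>j. j \<in> A \<Longrightarrow> smooth_comb f m (t j)) \<Longrightarrow> smooth_comb f m (\<lambda>z. \<Sum>j\<in>A. t j z)"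
proof (induction A rule: infinite_finite_induct)
  case (insert j A)
  then show ?case using smooth_comb_add[of f m "t j" "\<lambda>z. \<Sum>j\<in>A. t j z"] by simp
qed (auto simp: smooth_comb_def intro: exI[of _ "\<lambda>_ _. 0"])

lemma smooth_comb_mono:
  assumes "smooth_comb f m x" and "m \<le> m'"
  shows "smooth_comb f m' x"
proof -
  obtain c where c: "\<forall>k<m. \<forall>z. c k differentiable (at z)" and x: "x = (\<lambda>z. \<Sum>k<m. c k z *\<^sub>C dpow f k z)"
    using assms(1) unfolding smooth_comb_def fun_eq_iff by blast
  show ?thesis
    unfolding x using c assms(2) by (intro smooth_comb_sum smooth_comb_scale smooth_comb_dpow) auto
qed

text \<open>Since each dpow f k is holomorphic, the antiholomorphic derivative only sees the coefficients;
  this is why Dzb lowers the range of a smooth combination while Dz raises it by one.\<close>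

lemma smooth_comb_derivatives:
  assumes hd: "\<And>k z. (dpow f k has_derivative (\<lambda>h. h *\<^sub>C dpow f (Suc k) z)) (at z)"
    and x: "smooth_comb f m x"
  shows "x differentiable (at z)"
    and "Dz x z \<in> span_upto (\<lambda>k. dpow f k z) (Suc m)"
    and "Dzb x z \<in> span_upto (\<lambda>k. dpow f k z) m"
proof -
  obtain c where c: "\<forall>k<m. \<forall>z. c k differentiable (at z)" and xe: "x = (\<lambda>z. \<Sum>k<m. c k z *\<^sub>C dpow f k z)"
    using x unfolding smooth_comb_def fun_eq_iff by blast
  define Dc where "Dc k = (SOME D. (c k has_derivative D) (at z))" for k
  have Dc: "(c k has_derivative Dc k) (at z)" if "k < m" for k
    using c that unfolding Dc_def differentiable_def by (metis someI_ex)
  define D where "D h = (\<Sum>k<m. c k z *\<^sub>C (h *\<^sub>C dpow f (Suc k) z) + Dc k h *\<^sub>C dpow f k z)" for h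
  have D: "(x has_derivative D) (at z)"
    unfolding xe D_def
    by (intro has_derivative_sum bounded_bilinear.FDERIV[OF bounded_bilinear_scaleC] Dc hd) auto
  then show "x differentiable (at z)"
    unfolding differentiable_def by blast
  have span: "D h \<in> span_upto (\<lambda>k. dpow f k z) (Suc m)" for h
    unfolding D_def by (intro scaleC.span_sum scaleC.span_add scaleC.span_scale span_upto_base) auto
  show "Dz x z \<in> span_upto (\<lambda>k. dpow f k z) (Suc m)"
    unfolding Dz_of_has_derivative[OF D] by (intro scaleC.span_scale scaleC.span_diff span)
  have "D 1 + \<i> *\<^sub>C D \<i> = (\<Sum>k<m. (Dc k 1 + \<i> * Dc k \<i>) *\<^sub>C dpow f k z)"
    unfolding D_def scaleC.scale_sum_right sum.distrib[symmetric]
    by (rule sum.cong) (simp_all add: scaleC_add_right scaleC_add_left scaleC_scaleC scaleC_one algebra_simps)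
  then show "Dzb x z \<in> span_upto (\<lambda>k. dpow f k z) m"
    unfolding Dzb_of_has_derivative[OF D]
    by (metis (no_types, lifting) scaleC.span_scale scaleC.span_sum lessThan_iff span_upto_base)
qed

section \<open>Generalized Landau levels\<close>

context
  fixes f :: "complex \<Rightarrow> 'H::complex_inner"
  assumes hd: "\<And>k z. (dpow f k has_derivative (\<lambda>h. h *\<^sub>C dpow f (Suc k) z)) (at z)"
    and indep: "\<And>z n. lin_indep_upto (\<lambda>k. dpow f k z) n"
begin

lemma cinner_LL: "cinner (LL f i z) (LL f j z) = (if i = j then 1 else 0)"
  unfolding LL_eq_gram_schmidt by (rule cinner_gram_schmidt[OF indep])

lemma span_upto_LL: "span_upto (\<lambda>j. LL f j z) n = span_upto (\<lambda>k. dpow f k z) n"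
  unfolding LL_eq_gram_schmidt by (rule span_upto_gram_schmidt[OF indep])

lemma cinner_LL_span: "x \<in> span_upto (\<lambda>k. dpow f k z) n \<Longrightarrow> cinner (LL f n z) x = 0"
  unfolding LL_eq_gram_schmidt by (rule cinner_gram_schmidt_span[OF indep])

lemma LL_expand:
  assumes "x \<in> span_upto (\<lambda>j. LL f j z) m"
  shows "x = (\<Sum>j<m. cinner (LL f j z) x *\<^sub>C LL f j z)"
  by (rule orthonormal_upto_expand[OF _ assms]) (simp add: orthonormal_upto_def cinner_LL)

lemma smooth_comb_LL: "smooth_comb f (Suc n) (LL f n)"
proof (induction n rule: less_induct)
  case (less n)
  define w where "w z = dpow f n z - (\<Sum>j<n. cinner (LL f j z) (dpow f n z) *\<^sub>C LL f j z)" for z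
  have w: "w z \<noteq> 0" "LL f n z = complex_of_real (1 / norm (w z)) *\<^sub>C w z" for z
    unfolding w_def LL_eq_gram_schmidt by (rule gram_schmidt_formula[OF indep])+
  have "smooth_comb f (Suc n) w"
    unfolding w_def[abs_def]
  proof (intro smooth_comb_diff smooth_comb_dpow smooth_comb_sum smooth_comb_scale)
    fix j z assume "j \<in> {..<n}"
    then have LLj: "smooth_comb f (Suc j) (LL f j)" and "Suc j \<le> Suc n"
      using less.IH by auto
    then show "smooth_comb f (Suc n) (LL f j)"
      by (rule smooth_comb_mono)
    show "(\<lambda>z. cinner (LL f j z) (dpow f n z)) differentiable (at z)"
      by (rule differentiable_cinner[OF smooth_comb_derivatives(1)[OF hd LLj]])
        (use hd[of n z] in \<open>auto simp: differentiable_def\<close>)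
  qed simp
  then have "smooth_comb f (Suc n) (\<lambda>z. complex_of_real (1 / norm (w z)) *\<^sub>C w z)"
    by (intro smooth_comb_scale differentiable_inverse_norm smooth_comb_derivatives(1)[OF hd] w(1))
  then show ?case
    by (simp add: w(2)[abs_def])
qed

lemma LL_differentiable: "LL f n differentiable (at z)"
  by (rule smooth_comb_derivatives(1)[OF hd smooth_comb_LL])

lemma Dz_LL_span: "Dz (LL f n) z \<in> span_upto (\<lambda>k. dpow f k z) (Suc (Suc n))"
  by (rule smooth_comb_derivatives(2)[OF hd smooth_comb_LL])

lemma Dzb_LL_span: "Dzb (LL f n) z \<in> span_upto (\<lambda>k. dpow f k z) (Suc n)"
  by (rule smooth_comb_derivatives(3)[OF hd smooth_comb_LL])

lemma cinner_LL_Dz: "cinner (LL f i z) (Dz (LL f j) z) = - cinner (Dzb (LL f i) z) (LL f j z)"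
  by (rule cinner_Dz_eq_minus_Dzb[OF LL_differentiable LL_differentiable cinner_LL])

lemma cinner_LL_Dzb: "cinner (LL f i z) (Dzb (LL f j) z) = - cinner (Dz (LL f i) z) (LL f j z)"
  by (rule cinner_Dzb_eq_minus_Dz[OF LL_differentiable LL_differentiable cinner_LL])

text \<open>Differentiating the orthonormality relations moves the derivative onto the lower level,
  whose derivatives lie in spans that u_n is orthogonal to; only two components survive.\<close>

lemma Dz_LL_decomposition:
  "Dz (LL f n) z = cinner (LL f n z) (Dz (LL f n) z) *\<^sub>C LL f n z
     + cinner (LL f (Suc n) z) (Dz (LL f n) z) *\<^sub>C LL f (Suc n) z"
proof -
  have "cinner (LL f j z) (Dz (LL f n) z) = 0" if "j < n" for j
  proof -
    have "Dzb (LL f j) z \<in> span_upto (\<lambda>k. dpow f k z) n"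
      using Dzb_LL_span span_upto_mono[of "Suc j" n] that by auto
    then show ?thesis
      by (simp add: cinner_LL_Dz cinner_LL_span cinner_eq_zero_sym)
  qed
  moreover have "Dz (LL f n) z \<in> span_upto (\<lambda>j. LL f j z) (Suc (Suc n))"
    using Dz_LL_span by (simp add: span_upto_LL)
  then have "Dz (LL f n) z = (\<Sum>j<Suc (Suc n). cinner (LL f j z) (Dz (LL f n) z) *\<^sub>C LL f j z)"
    by (rule LL_expand)
  ultimately show ?thesis
    by (simp add: sum.neutral)
qed

lemma Dzb_LL_decomposition:
  "Dzb (LL f n) z = cinner (LL f n z) (Dzb (LL f n) z) *\<^sub>C LL f n z
     + (if n = 0 then 0 else cinner (LL f (n - 1) z) (Dzb (LL f n) z) *\<^sub>C LL f (n - 1) z)"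
proof -
  have "cinner (LL f j z) (Dzb (LL f n) z) = 0" if "Suc j < n" for j
  proof -
    have "Dz (LL f j) z \<in> span_upto (\<lambda>k. dpow f k z) n"
      using Dz_LL_span span_upto_mono[of "Suc (Suc j)" n] that by auto
    then show ?thesis
      by (simp add: cinner_LL_Dzb cinner_LL_span cinner_eq_zero_sym)
  qed
  moreover have "Dzb (LL f n) z \<in> span_upto (\<lambda>j. LL f j z) (Suc n)"
    using Dzb_LL_span by (simp add: span_upto_LL)
  then have "Dzb (LL f n) z = (\<Sum>j<Suc n. cinner (LL f j z) (Dzb (LL f n) z) *\<^sub>C LL f j z)"
    by (rule LL_expand)
  ultimately show ?thesis
    by (cases n) (simp_all add: sum.neutral add.commute)
qed

lemma Omega_trg_LL:
  "Omega (LL f n) z = 2 * (hN f (Suc n) z - hN f n z) \<and> trg (LL f n) z = 2 * (hN f (Suc n) z + hN f n z)"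
proof -
  define \<alpha> where "\<alpha> = cinner (LL f (Suc n) z) (Dz (LL f n) z)"
  obtain \<beta> e where b: "Dzb (LL f n) z = cinner (LL f n z) (Dzb (LL f n) z) *\<^sub>C LL f n z + \<beta> *\<^sub>C e"
    and e: "cinner e e = 1" "cinner (LL f n z) e = 0" "cinner (LL f (Suc n) z) e = 0"
    and hn: "hN f n z = (cmod \<beta>)\<^sup>2"
  proof (cases n)
    case 0
    \<comment> \<open>u_0 has no lower level; any unit vector orthogonal to u_0 and u_1 will do.\<close>
    show thesis
      by (rule that[of 0 "LL f 2 z"]) (use Dzb_LL_decomposition[of n z] 0 in \<open>simp_all add: hN_def cinner_LL\<close>)
  next
    case (Suc m)
    have "cinner (LL f m z) (Dzb (LL f n) z) = - cnj (cinner (LL f n z) (Dz (LL f m) z))"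
      by (simp add: cinner_LL_Dzb cinner_conj_sym[of "Dz (LL f m) z"])
    then show thesis
      by (intro that[of "cinner (LL f m z) (Dzb (LL f n) z)" "LL f m z"])
        (use Dzb_LL_decomposition[of n z] Suc in \<open>simp_all add: hN_def cinner_LL\<close>)
  qed
  have "hN f (Suc n) z = (cmod \<alpha>)\<^sup>2"
    by (simp add: hN_def \<alpha>_def)
  with Omega_trg_of_Wirtinger_decomposition[OF _ _ e(1) _ e(2,3) Dz_LL_decomposition[of n z, folded \<alpha>_def] b] hn
  show ?thesis
    by (simp add: cinner_LL)
qed

lemma hN_one_pos: "hN f 1 z > 0"
proof -
  define s where "s w = complex_of_real (1 / norm (f w))" for w
  have "f w \<noteq> 0" and LL0: "LL f 0 w = s w *\<^sub>C f w" for w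
    using gram_schmidt_formula[OF indep[of w], where n=0] by (simp_all add: s_def LL_eq_gram_schmidt)
  have f: "f differentiable (at z)"
    using hd[of 0 z] by (auto simp: differentiable_def)
  then have "s differentiable (at z)"
    unfolding s_def by (rule differentiable_inverse_norm) fact
  from Dz_scaleC[OF this f] have "Dz (LL f 0) z = s z *\<^sub>C dpow f 1 z + Dz s z *\<^sub>C f z"
    by (simp add: LL0[abs_def])
  moreover have "cinner (LL f 1 z) (f z) = 0"
    using cinner_LL_span[of "f z" z 1] span_upto_base[of 0 1 "\<lambda>k. dpow f k z"] by simp
  ultimately have "cinner (LL f 1 z) (Dz (LL f 0) z) = s z * cinner (LL f 1 z) (dpow f 1 z)"
    by (simp add: cinner_simps)
  moreover have "s z \<noteq> 0"
    using \<open>f z \<noteq> 0\<close> by (simp add: s_def)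
  moreover have "cinner (LL f 1 z) (dpow f 1 z) \<noteq> 0"
    unfolding LL_eq_gram_schmidt by (rule cinner_gram_schmidt_nonzero[OF indep])
  ultimately show ?thesis
    by (simp add: hN_def)
qed

end

theorem mainTheorem6:
  fixes f :: "complex \<Rightarrow> 'H::{complex_inner, complete_space}"
    and L :: "complex set"
  assumes separable: "\<exists>D::'H set. countable D \<and> closure D = UNIV"
    and lattice: "is_lattice L"
    and holo: "hol f"
    and indep: "\<forall>z n. lin_indep_upto (\<lambda>k. dpow f k z) n"
    and quasi_periodic: "\<forall>l\<in>L. \<exists>c V. c holomorphic_on UNIV \<and> (\<forall>z. c z \<noteq> 0) \<and> unitary_op V
                                \<and> (\<forall>z. f (z + l) = c z *\<^sub>C V (f z))"
  shows "(\<forall>n z. Omega (LL f n) z = 2 * (hN f (Suc n) z - hN f n z)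
               \<and> trg (LL f n) z = 2 * (hN f (Suc n) z + hN f n z))
         \<and> (\<forall>z. Omega (LL f 0) z = 2 * hN f 1 z \<and> trg (LL f 0) z = 2 * hN f 1 z
               \<and> hN f 1 z > 0)"
proof -
  note hd = has_derivative_dpow[OF holo]
  have identities: "\<forall>n z. Omega (LL f n) z = 2 * (hN f (Suc n) z - hN f n z)
               \<and> trg (LL f n) z = 2 * (hN f (Suc n) z + hN f n z)"
    using Omega_trg_LL[OF hd indep[rule_format]] by blast
  moreover have "hN f 0 z = 0" for z
    by (simp add: hN_def)
  ultimately show ?thesis
    using hN_one_pos[OF hd indep[rule_format]] by simp
qed

end
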